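(* Let $N\ge2$, let $\alpha(N)$ be given by $\alpha(2)=2\pi$ and $\alpha(N)=N(N-2)\frac{\pi^{N/2}}{\Gamma(N/2+1)}$ for $N\ge3$, let $K>0$ and $C$, $\alpha$ be real constants, and put $\epsilon^*=\frac{\alpha(N)e^C}{4}$. Let $a(t)$ be a nonvanishing function and let $\Phi(s)$ be a $C^2$ function on an interval $I\ni0$ satisfying \[ s\ddot\Phi(s)+\dot\Phi(s)-\epsilon^*e^{-\Phi(s)/K}=0\ \text{on } I,\qquad \Phi(0)=\alpha,\quad \dot\Phi(0)=\epsilon^*e^{-\alpha/K}. \] Then, with $s=\frac{x_1^2+x_2^2}{a(t)}\in I$, the density \[ \rho(t,\vec x)=\frac{1}{a(t)}\exp\!\Big(-\frac{\Phi(s)}{K}+C\Big) \] and the potential $\Phi(t,\vec x)=\Phi\big(\frac{x_1^2+x_2^2}{a(t)}\big)$ satisfy the Poisson equation $\Delta\Phi(t,\vec x)=\alpha(N)\rho(t,\vec x)$ in $\mathbb{R}^N$ (the Laplacian taken in $\vec x$).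
   Context: $\Gamma$ is the Gamma function; $\dot\Phi=d\Phi/ds$. *)

theory Defs
  imports "HOL-Analysis.Analysis"
begin

definition alphaN :: "nat \<Rightarrow> real" where
  "alphaN N = (if N = 2 then 2 * pi
               else real N * (real N - 2) * pi powr (real N / 2) / Gamma (real N / 2 + 1))"

text \<open>Points of R^N are represented as functions nat => real; the coordinates are
  x 0, ..., x (N-1) (so the paper's x_1, x_2 are x 0, x 1).\<close>

definition twice_diff_at :: "(real \<Rightarrow> real) \<Rightarrow> real \<Rightarrow> bool" where
  "twice_diff_at g y \<longleftrightarrow> (\<forall>\<^sub>F z in nhds y. g differentiable (at z)) \<and> deriv g differentiable (at y)"

definition second_partial :: "((nat \<Rightarrow> real) \<Rightarrow> real) \<Rightarrow> nat \<Rightarrow> (nat \<Rightarrow> real) \<Rightarrow> real" where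
  "second_partial u i x = deriv (deriv (\<lambda>h. u (x(i := h)))) (x i)"

definition laplacian :: "nat \<Rightarrow> ((nat \<Rightarrow> real) \<Rightarrow> real) \<Rightarrow> (nat \<Rightarrow> real) \<Rightarrow> real" where
  "laplacian N u x = (\<Sum>i<N. second_partial u i x)"

end

theory Submission imports Defs begin

text \<open>The potential depends on the space variable only through \<open>s = (x\<^sub>1\<^sup>2 + x\<^sub>2\<^sup>2) / a(t)\<close>,
  so only the two second partials in \<open>x\<^sub>1, x\<^sub>2\<close> contribute to the Laplacian. By the chain
  rule each is \<open>\<Phi>''(s) (2x\<^sub>i/a)\<^sup>2 + \<Phi>'(s) (2/a)\<close>, and their sum is
  \<open>(4/a) (s \<Phi>''(s) + \<Phi>'(s))\<close>, which the ODE turns into \<open>\<alpha>(N) \<rho>\<close>.\<close>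

lemma twice_diff_atI:
  assumes "\<forall>\<^sub>F z in nhds y. g differentiable (at z)"
    and "(deriv g has_real_derivative D) (at y)"
  shows "twice_diff_at g y" and "deriv (deriv g) y = D"
  using assms by (auto simp: twice_diff_at_def real_differentiable_def intro: DERIV_imp_deriv)

lemma twice_diff_at_const: "twice_diff_at (\<lambda>h. c) y"
  by (simp add: twice_diff_at_def)

lemma has_real_derivative_deriv_comp:
  fixes f f' f'' q q' q'' :: "real \<Rightarrow> real"
  assumes S: "open S" "q y \<in> S"
    and f': "\<And>s. s \<in> S \<Longrightarrow> (f has_real_derivative f' s) (at s)"
    and f'': "\<And>s. s \<in> S \<Longrightarrow> (f' has_real_derivative f'' s) (at s)"
    and q': "\<And>h. (q has_real_derivative q' h) (at h)"
    and q'': "\<And>h. (q' has_real_derivative q'' h) (at h)"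
  shows "\<forall>\<^sub>F z in nhds y. (\<lambda>h. f (q h)) differentiable (at z)"
    and "(deriv (\<lambda>h. f (q h)) has_real_derivative f'' (q y) * (q' y)\<^sup>2 + f' (q y) * q'' y) (at y)"
proof -
  have open_pre: "open (q -` S)"
    using S(1) q' by (intro continuous_open_vimage) (auto intro: DERIV_isCont)
  have first: "((\<lambda>h. f (q h)) has_real_derivative f' (q z) * q' z) (at z)" if "z \<in> q -` S" for z
    using DERIV_chain2[OF f' q'] that by simp
  show "\<forall>\<^sub>F z in nhds y. (\<lambda>h. f (q h)) differentiable (at z)"
    using open_pre S(2) first unfolding eventually_nhds real_differentiable_def by blast
  have second: "((\<lambda>h. f' (q h) * q' h) has_real_derivative f'' (q y) * (q' y)\<^sup>2 + f' (q y) * q'' y) (at y)"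
    using DERIV_mult[OF DERIV_chain2[OF f''[OF S(2)] q'] q''] by (simp add: power2_eq_square algebra_simps)
  have deriv_eq: "deriv (\<lambda>h. f (q h)) z = f' (q z) * q' z" if "z \<in> q -` S" for z
    using first[OF that] by (rule DERIV_imp_deriv)
  show "(deriv (\<lambda>h. f (q h)) has_real_derivative f'' (q y) * (q' y)\<^sup>2 + f' (q y) * q'' y) (at y)"
    by (rule has_field_derivative_transform_within_open[OF second open_pre]) (simp_all add: S(2) deriv_eq)
qed

lemma second_derivative_comp_quadratic:
  fixes f f' f'' :: "real \<Rightarrow> real"
  assumes A: "A \<noteq> 0" and S: "open S" "(y\<^sup>2 + c) / A \<in> S"
    and f': "\<And>s. s \<in> S \<Longrightarrow> (f has_real_derivative f' s) (at s)"
    and f'': "\<And>s. s \<in> S \<Longrightarrow> (f' has_real_derivative f'' s) (at s)"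
  shows "twice_diff_at (\<lambda>h. f ((h\<^sup>2 + c) / A)) y"
    and "deriv (deriv (\<lambda>h. f ((h\<^sup>2 + c) / A))) y
           = f'' ((y\<^sup>2 + c) / A) * (2 * y / A)\<^sup>2 + f' ((y\<^sup>2 + c) / A) * (2 / A)"
proof -
  have q': "((\<lambda>h. (h\<^sup>2 + c) / A) has_real_derivative 2 * h / A) (at h)" for h
    using A by (auto intro!: derivative_eq_intros)
  have q'': "((\<lambda>h. 2 * h / A) has_real_derivative 2 / A) (at h)" for h
    using A by (auto intro!: derivative_eq_intros)
  note D = has_real_derivative_deriv_comp[where q = "\<lambda>h. (h\<^sup>2 + c) / A", OF S f' f'' q' q'']
  show "twice_diff_at (\<lambda>h. f ((h\<^sup>2 + c) / A)) y"
    and "deriv (deriv (\<lambda>h. f ((h\<^sup>2 + c) / A))) y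
           = f'' ((y\<^sup>2 + c) / A) * (2 * y / A)\<^sup>2 + f' ((y\<^sup>2 + c) / A) * (2 / A)"
    using twice_diff_atI[OF D] by simp_all
qed

lemma laplacian_eq_first_two:
  assumes "N \<ge> 2" and "\<And>i. i \<ge> 2 \<Longrightarrow> second_partial u i x = 0"
  shows "laplacian N u x = second_partial u 0 x + second_partial u 1 x"
proof -
  have "{..<N} = {0, 1} \<union> {2..<N}" using assms(1) by auto
  then show ?thesis
    unfolding laplacian_def by (simp add: sum.union_disjoint assms(2))
qed

lemma laplacian_planar_radial:
  fixes f f' f'' :: "real \<Rightarrow> real" and A :: real and x :: "nat \<Rightarrow> real"
  defines "u \<equiv> \<lambda>y. f (((y 0)\<^sup>2 + (y 1)\<^sup>2) / A)"
  defines "s \<equiv> ((x 0)\<^sup>2 + (x 1)\<^sup>2) / A"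
  assumes N: "N \<ge> 2" and A: "A \<noteq> 0" and S: "open S" "s \<in> S"
    and f': "\<And>s. s \<in> S \<Longrightarrow> (f has_real_derivative f' s) (at s)"
    and f'': "\<And>s. s \<in> S \<Longrightarrow> (f' has_real_derivative f'' s) (at s)"
  shows "\<forall>i<N. twice_diff_at (\<lambda>h. u (x(i := h))) (x i)"
    and "laplacian N u x = (4 / A) * (s * f'' s + f' s)"
proof -
  have slice0: "(\<lambda>h. u (x(0 := h))) = (\<lambda>h. f ((h\<^sup>2 + (x 1)\<^sup>2) / A))"
    by (simp add: u_def)
  have slice1: "(\<lambda>h. u (x(1 := h))) = (\<lambda>h. f ((h\<^sup>2 + (x 0)\<^sup>2) / A))"
    by (simp add: u_def add.commute)
  have slice_const: "(\<lambda>h. u (x(i := h))) = (\<lambda>h. u x)" if "i \<ge> 2" for i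
    using that by (simp add: u_def)
  have s0: "((x 0)\<^sup>2 + (x 1)\<^sup>2) / A \<in> S" and s1: "((x 1)\<^sup>2 + (x 0)\<^sup>2) / A \<in> S"
    using S(2) by (simp_all add: s_def add.commute)
  note D0 = second_derivative_comp_quadratic[OF A S(1) s0 f' f'']
  note D1 = second_derivative_comp_quadratic[OF A S(1) s1 f' f'']
  show "\<forall>i<N. twice_diff_at (\<lambda>h. u (x(i := h))) (x i)"
  proof (intro allI impI)
    fix i assume "i < N"
    consider "i = 0" | "i = 1" | "i \<ge> 2" by linarith
    then show "twice_diff_at (\<lambda>h. u (x(i := h))) (x i)"
      by cases (use D0(1) D1(1) slice0 slice1 slice_const twice_diff_at_const in auto)
  qed
  have "laplacian N u x = second_partial u 0 x + second_partial u 1 x"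
    by (rule laplacian_eq_first_two[OF N]) (simp add: second_partial_def slice_const)
  also have "\<dots> = (4 / A) * (s * f'' s + f' s)"
    using A D0(2) D1(2) unfolding second_partial_def slice0 slice1 s_def
    by (simp add: add.commute field_simps power2_eq_square)
  finally show "laplacian N u x = (4 / A) * (s * f'' s + f' s)" .
qed

theorem lemma3:
  fixes N :: nat and K C alpha0 :: real and a :: "real \<Rightarrow> real"
    and Phi dPhi ddPhi :: "real \<Rightarrow> real" and I :: "real set"
  assumes N: "N \<ge> 2"
    and K: "K > 0"
    and a_nz: "\<And>t. a t \<noteq> 0"
    and I: "is_interval I" "open I" "0 \<in> I"
    and d1: "\<And>s. s \<in> I \<Longrightarrow> (Phi has_real_derivative dPhi s) (at s)"
    and d2: "\<And>s. s \<in> I \<Longrightarrow> (dPhi has_real_derivative ddPhi s) (at s)"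
    and d2c: "continuous_on I ddPhi"
    and ode: "\<And>s. s \<in> I \<Longrightarrow>
               s * ddPhi s + dPhi s - (alphaN N * exp C / 4) * exp (- Phi s / K) = 0"
    and init: "Phi 0 = alpha0" "dPhi 0 = (alphaN N * exp C / 4) * exp (- alpha0 / K)"
  shows "\<forall>t (x :: nat \<Rightarrow> real). ((x 0)\<^sup>2 + (x 1)\<^sup>2) / a t \<in> I \<longrightarrow>
           ((\<forall>i<N. twice_diff_at (\<lambda>h. (\<lambda>y. Phi (((y 0)\<^sup>2 + (y 1)\<^sup>2) / a t)) (x(i := h))) (x i))
            \<and> laplacian N (\<lambda>y. Phi (((y 0)\<^sup>2 + (y 1)\<^sup>2) / a t)) x
                = alphaN N * ((1 / a t) * exp (- Phi (((x 0)\<^sup>2 + (x 1)\<^sup>2) / a t) / K + C)))"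
proof (intro allI impI, rule conjI)
  \<comment> \<open>Only the ODE on \<open>I\<close> is needed: \<open>K > 0\<close>, the continuity of \<open>\<Phi>''\<close> and the
     initial values play no role in the identity itself.\<close>
  fix t and x :: "nat \<Rightarrow> real"
  define s where "s = ((x 0)\<^sup>2 + (x 1)\<^sup>2) / a t"
  assume "((x 0)\<^sup>2 + (x 1)\<^sup>2) / a t \<in> I"
  then have sI: "s \<in> I" by (simp add: s_def)
  note radial = laplacian_planar_radial[OF N a_nz I(2) sI[unfolded s_def] d1 d2]
  show "\<forall>i<N. twice_diff_at (\<lambda>h. (\<lambda>y. Phi (((y 0)\<^sup>2 + (y 1)\<^sup>2) / a t)) (x(i := h))) (x i)"
    using radial(1) by (simp add: s_def)
  have "s * ddPhi s + dPhi s = (alphaN N * exp C / 4) * exp (- Phi s / K)"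
    using ode[OF sI] by linarith
  then have "(4 / a t) * (s * ddPhi s + dPhi s) = alphaN N * ((1 / a t) * exp (- Phi s / K + C))"
    using a_nz[of t] by (simp add: exp_add exp_diff exp_minus field_simps)
  then show "laplacian N (\<lambda>y. Phi (((y 0)\<^sup>2 + (y 1)\<^sup>2) / a t)) x
      = alphaN N * ((1 / a t) * exp (- Phi (((x 0)\<^sup>2 + (x 1)\<^sup>2) / a t) / K + C))"
    using radial(2) by (simp add: s_def)
qed

end
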